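(* Let $k_0$ be a field with $\operatorname{char}k_0\neq3$. Let $T\subset E_6^{\mathrm{ad}}$ be a split maximal torus with root system $\Phi\subset X(T)$ and Weyl group $W$. There exists a surjective homomorphism $\varepsilon:X(T)\to\mathbb{F}_3^2$ such that $\varepsilon(\alpha)\neq0$ for all $\alpha\in\Phi$, $X(T)^{W(\varepsilon)_3}=\{0\}$ for a Sylow $3$-subgroup $W(\varepsilon)_3$ of $W(\varepsilon)$, and $\operatorname{Rank}(W(\varepsilon),X(T);3)\geq12$.
   Context: $E_6^{\mathrm{ad}}$ is the split adjoint group of type $E_6$ over $k_0$. $W(\varepsilon)=\{w\in W:\varepsilon(w.\chi)=\varepsilon(\chi)\ \forall\chi\in X(T)\}$. For a finite group $S$ acting on a finitely generated abelian group $\mathcal{U}$ with Sylow $p$-subgroup $S_p$, $\operatorname{Rank}(S,\mathcal{U};p)$ is the minimal size of an $S_p$-invariant subset of $\mathcal{U}$ generating a subgroup of finite index prime to $p$. *)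

theory Defs
  imports "HOL-Analysis.Analysis"
begin

text \<open>For the split adjoint group E6 the character lattice X(T) is the root lattice.
  We identify X(T) with int^6 using the basis of simple roots alpha_1,...,alpha_6
  (Bourbaki numbering 1..6 mapped to indices 0..5 of the type 6).\<close>

type_synonym charlat = "int ^ 6"
type_synonym weylmat = "int ^ 6 ^ 6"

definition idx :: "6 \<Rightarrow> nat" where
  "idx i = nat (Rep_bit0 i)"

text \<open>Cartan matrix of E6, Bourbaki labelling: Dynkin edges 1-3, 3-4, 4-5, 5-6, 2-4.
  In 0-based indices: 0-2, 2-3, 3-4, 4-5, 1-3.\<close>
definition e6_edge :: "nat \<Rightarrow> nat \<Rightarrow> bool" where
  "e6_edge a b \<longleftrightarrow> {a, b} \<in> {{0,2}, {2,3}, {3,4}, {4,5}, {1,3}}"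

definition cartan :: "6 \<Rightarrow> 6 \<Rightarrow> int" where
  "cartan i j = (if i = j then 2 else if e6_edge (idx i) (idx j) then -1 else 0)"

definition simple_root :: "6 \<Rightarrow> charlat" where
  "simple_root i = axis i 1"

text \<open>Simple reflection s_i(x) = x - <x, alpha_i^vee> alpha_i, as an integer matrix
  in the simple-root basis.\<close>
definition simple_refl :: "6 \<Rightarrow> weylmat" where
  "simple_refl i = (\<chi> k j. (if k = j then 1 else 0) - (if k = i then cartan j i else 0))"

inductive_set weyl_group :: "weylmat set" where
  one: "mat 1 \<in> weyl_group"
| step: "w \<in> weyl_group \<Longrightarrow> simple_refl i ** w \<in> weyl_group"

definition roots :: "charlat set" where
  "roots = {w *v simple_root i | w i. w \<in> weyl_group}"

definition W_eps :: "(charlat \<Rightarrow> 'b) \<Rightarrow> weylmat set" where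
  "W_eps eps = {w \<in> weyl_group. \<forall>x. eps (w *v x) = eps x}"

definition is_subgroup :: "(int ^ 'a::finite ^ 'a) set \<Rightarrow> (int ^ 'a::finite ^ 'a) set \<Rightarrow> bool" where
  "is_subgroup P S \<longleftrightarrow> P \<subseteq> S \<and> mat 1 \<in> P \<and> (\<forall>a\<in>P. \<forall>b\<in>P. a ** b \<in> P)
     \<and> (\<forall>a\<in>P. \<exists>b\<in>P. a ** b = mat 1 \<and> b ** a = mat 1)"

definition sylow :: "nat \<Rightarrow> (int ^ 'a::finite ^ 'a) set \<Rightarrow> (int ^ 'a ^ 'a) set \<Rightarrow> bool" where
  "sylow p S P \<longleftrightarrow> is_subgroup P S \<and> card P = p ^ multiplicity p (card S)"

definition fixed_pts :: "(int ^ 'a ^ 'a) set \<Rightarrow> (int ^ 'a::finite) set" where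
  "fixed_pts P = {x. \<forall>w\<in>P. w *v x = x}"

definition gen_subgroup :: "(int ^ 'a::finite) set \<Rightarrow> (int ^ 'a) set" where
  "gen_subgroup A = {x. \<exists>c. x = (\<Sum>a\<in>A. c a *s a)}"

definition cosets :: "(int ^ 'a::finite) set \<Rightarrow> (int ^ 'a) set set" where
  "cosets L = range (\<lambda>x. (\<lambda>l. x + l) ` L)"

definition finite_index_prime_to :: "nat \<Rightarrow> (int ^ 'a::finite) set \<Rightarrow> bool" where
  "finite_index_prime_to p L \<longleftrightarrow> finite (cosets L) \<and> \<not> p dvd card (cosets L)"

text \<open>Rank(S, U; p) for S acting on U = int^n by matrices, with respect to a Sylow
  p-subgroup Sp: the minimal size of an Sp-invariant subset of U generating a
  subgroup of finite index prime to p.\<close>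
definition invariant_gen_set :: "nat \<Rightarrow> (int ^ 'a ^ 'a) set \<Rightarrow> (int ^ 'a::finite) set \<Rightarrow> bool" where
  "invariant_gen_set p Sp A \<longleftrightarrow> finite A \<and> (\<forall>w\<in>Sp. \<forall>a\<in>A. w *v a \<in> A)
      \<and> finite_index_prime_to p (gen_subgroup A)"

definition Rank :: "nat \<Rightarrow> (int ^ 'a ^ 'a) set \<Rightarrow> (int ^ 'a::finite ^ 'a) set \<Rightarrow> nat" where
  "Rank p S Sp = (LEAST n. \<exists>A :: (int ^ 'a) set. invariant_gen_set p Sp A \<and> card A = n)"

end

theory Submission
  imports Defs
begin

(* Take eps(x) = (x_4, x_1 + x_2 + x_3 + x_5 + x_6) mod 3 for x = sum x_i alpha_i in Bourbaki
   labels; all 72 roots have nonzero image. The stabiliser W(eps) is found by exhaustive search: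
   an element of W is determined by the images of the simple roots, which are roots with the same
   eps-values, with the Cartan matrix as Gram matrix, and fixing 3 omega_1 modulo 3 X(T). Exactly
   27 such frames exist, each realised by an explicit word in the simple reflections, so W(eps)
   has order 27 and is its own unique Sylow 3-subgroup. Two explicit elements G1, G2 of W(eps)
   have no common nonzero fixed vector.

   For the rank: the image under eps of a generating set of index prime to 3 spans F_3^2, so the
   set meets two different nonzero eps-fibres. These fibres are W(eps)-stable, and every
   W(eps)-orbit of a nonzero vector x has at least 6 elements: an element Z of order 3 acts
   without fixed points, and G1 or G2 moves x out of its Z-orbit. *)

lemma matrix_vector_mult_axis: "(A *v axis j 1) $ k = (A $ k $ j :: 'a::semiring_1)"
  by (simp add: matrix_vector_mult_def axis_def if_distrib if_distribR cong: if_cong)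

lemma matrix_vector_mult_smult: "A *v (c *s x) = c *s (A *v x :: 'a::comm_semiring_1^'m)"
  by (simp add: vec_eq_iff matrix_vector_mult_def sum_distrib_left mult_ac)

lemma additive_smult_int:
  fixes f :: "int^'n \<Rightarrow> 'a::ring_1^'m"
  assumes "\<And>x y. f (x + y) = f x + f y"
  shows "f (c *s x) = of_int c *s f x"
proof -
  interpret additive f by unfold_locales fact
  have nat: "f (int n *s x) = of_nat n *s f x" for n
    by (induction n) (simp_all add: zero add)
  show ?thesis
  proof (cases c rule: int_cases)
    case (nonneg n)
    then show ?thesis using nat by simp
  next
    case (neg n)
    then have "c *s x = - (int (Suc n) *s x)" by (simp add: vec_eq_iff)
    then have "f (c *s x) = - (of_nat (Suc n) *s f x)" by (simp only: minus nat)
    then show ?thesis using neg by (simp add: vec_eq_iff)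
  qed
qed

lemma additive_matrix_invariant_iff:
  fixes f :: "int^'n \<Rightarrow> 'a::comm_ring_1^'m" and w :: "int^'n^'n"
  assumes "\<And>x y. f (x + y) = f x + f y"
  shows "(\<forall>x. f (w *v x) = f x) \<longleftrightarrow> (\<forall>j. f (w *v axis j 1) = f (axis j 1))"
proof (intro iffI allI)
  interpret additive f by unfold_locales fact
  fix x
  assume on_basis: "\<forall>j. f (w *v axis j 1) = f (axis j 1)"
  have "w *v x = (\<Sum>j\<in>UNIV. x $ j *s (w *v axis j 1))"
    unfolding vec_eq_iff
    by (simp add: matrix_vector_mult_axis) (simp add: matrix_vector_mult_def mult.commute)
  then have "f (w *v x) = f (\<Sum>j\<in>UNIV. x $ j *s (w *v axis j 1))" by simp
  also have "\<dots> = (\<Sum>j\<in>UNIV. of_int (x $ j) *s f (axis j 1))"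
    by (simp add: sum additive_smult_int[OF assms] on_basis)
  also have "\<dots> = f (\<Sum>j\<in>UNIV. x $ j *s axis j 1)"
    by (simp add: sum additive_smult_int[OF assms])
  finally show "f (w *v x) = f x" by (simp add: basis_expansion)
qed simp

section \<open>Generating sets of index prime to \<open>p\<close>\<close>

lemma gen_subgroup_0: "0 \<in> gen_subgroup A"
  unfolding gen_subgroup_def by (auto intro: exI[of _ "\<lambda>_. 0"])

lemma gen_subgroup_add:
  assumes "u \<in> gen_subgroup A" "v \<in> gen_subgroup A"
  shows "u + v \<in> gen_subgroup A"
proof -
  obtain c d where "u = (\<Sum>a\<in>A. c a *s a)" "v = (\<Sum>a\<in>A. d a *s a)"
    using assms by (auto simp: gen_subgroup_def)
  then have "u + v = (\<Sum>a\<in>A. (c a + d a) *s a)"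
    by (simp add: sum.distrib vector_sadd_rdistrib)
  then show ?thesis unfolding gen_subgroup_def mem_Collect_eq by (intro exI[of _ "\<lambda>a. c a + d a"])
qed

lemma gen_subgroup_smult:
  assumes "u \<in> gen_subgroup A"
  shows "k *s u \<in> gen_subgroup A"
proof -
  obtain c where "u = (\<Sum>a\<in>A. c a *s a)"
    using assms by (auto simp: gen_subgroup_def)
  then have "k *s u = (\<Sum>a\<in>A. (k * c a) *s a)"
    by (simp add: vec_eq_iff sum_distrib_left mult.assoc)
  then show ?thesis unfolding gen_subgroup_def mem_Collect_eq by (intro exI[of _ "\<lambda>a. k * c a"])
qed

lemma gen_subgroup_sum: "(\<And>i. i \<in> I \<Longrightarrow> f i \<in> gen_subgroup A) \<Longrightarrow> sum f I \<in> gen_subgroup A"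
  by (induction I rule: infinite_finite_induct) (auto intro: gen_subgroup_0 gen_subgroup_add)

lemma gen_subgroup_mem:
  assumes "finite A" "a \<in> A"
  shows "a \<in> gen_subgroup A"
proof -
  have "(\<Sum>b\<in>A. (if b = a then 1 else 0) *s b) = (\<Sum>b\<in>A. if b = a then a else 0)"
    by (rule sum.cong) auto
  also have "\<dots> = a" using assms by simp
  finally show ?thesis
    unfolding gen_subgroup_def mem_Collect_eq by (intro exI[of _ "\<lambda>b. if b = a then 1 else 0"]) simp
qed

lemma translate_coset:
  assumes "K \<in> cosets L"
  shows "(+) x ` K \<in> cosets L"
proof -
  obtain y where "K = (+) y ` L" using assms unfolding cosets_def by blast
  then have "(+) x ` K = (+) (x + y) ` L" by (simp add: image_image add.assoc)
  then show ?thesis by (simp add: cosets_def)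
qed

text \<open>The index kills every element: translation by \<open>x\<close> permutes the cosets, so summing
  \<open>rep (x + K) - rep K \<in> x + L\<close> over all cosets \<open>K\<close> gives \<open>n x \<in> L\<close>.\<close>

lemma card_cosets_smult_mem:
  fixes A :: "(int^'n::finite) set"
  defines "L \<equiv> gen_subgroup A"
  shows "int (card (cosets L)) *s x \<in> L"
proof -
  define rep where "rep K = (SOME y. K = (+) y ` L)" for K
  have rep: "K = (+) (rep K) ` L" if K: "K \<in> cosets L" for K
  proof -
    obtain y where "K = (+) y ` L" using K unfolding cosets_def by blast
    then show ?thesis unfolding rep_def by (rule someI)
  qed
  have inv: "(+) (- x) ` ((+) x ` K) = K" "(+) x ` ((+) (- x) ` K) = K" for K
    by (simp_all add: image_image)
  have bij: "bij_betw ((`) ((+) x)) (cosets L) (cosets L)"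
  proof (rule bij_betw_byWitness[where f' = "(`) ((+) (- x))"])
    show "(`) ((+) x) ` cosets L \<subseteq> cosets L" "(`) ((+) (- x)) ` cosets L \<subseteq> cosets L"
      by (rule image_subsetI, erule translate_coset)+
  qed (use inv in blast)+
  have "rep ((+) x ` K) - (x + rep K) \<in> L" if K: "K \<in> cosets L" for K
  proof -
    have "rep ((+) x ` K) + 0 \<in> (+) (rep ((+) x ` K)) ` L"
      using gen_subgroup_0 unfolding L_def by blast
    then have "rep ((+) x ` K) \<in> (+) x ` K"
      using rep[OF translate_coset[OF K]] by simp
    then obtain k where k: "k \<in> K" "rep ((+) x ` K) = x + k" by blast
    obtain l where "l \<in> L" "k = rep K + l"
      using k(1) rep[OF K] by blast
    then show ?thesis using k(2) by (simp add: algebra_simps)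
  qed
  then have "(\<Sum>K\<in>cosets L. rep ((+) x ` K) - (x + rep K)) \<in> L"
    unfolding L_def by (rule gen_subgroup_sum)
  moreover have "(\<Sum>K\<in>cosets L. rep ((+) x ` K)) = (\<Sum>K\<in>cosets L. rep K)"
    using sum.reindex_bij_betw[OF bij] .
  then have "(\<Sum>K\<in>cosets L. rep ((+) x ` K) - (x + rep K)) = (- int (card (cosets L))) *s x"
    by (simp add: sum_subtractf sum.distrib vec_eq_iff of_nat_index)
  ultimately have "(- 1) *s ((- int (card (cosets L))) *s x) \<in> L"
    unfolding L_def by (metis gen_subgroup_smult)
  then show ?thesis by (simp add: vector_smult_assoc)
qed

lemma index_prime_to_decomp:
  assumes "prime p" "finite_index_prime_to p (gen_subgroup A)"
  obtains l y where "l \<in> gen_subgroup A" "x = l + int p *s y"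
proof -
  define n where "n = card (cosets (gen_subgroup A))"
  have "coprime (int n) (int p)"
    using assms by (simp add: finite_index_prime_to_def n_def prime_imp_coprime coprime_commute)
  then obtain u v where uv: "u * int n + v * int p = 1"
    by (metis bezout_int coprime_imp_gcd_eq_1)
  have "u *s (int n *s x) + int p *s (v *s x) = (u * int n + v * int p) *s x"
    by (simp add: vec_eq_iff algebra_simps)
  then have "x = u *s (int n *s x) + int p *s (v *s x)"
    by (simp add: uv)
  moreover have "int n *s x \<in> gen_subgroup A"
    unfolding n_def by (rule card_cosets_smult_mem)
  then have "u *s (int n *s x) \<in> gen_subgroup A"
    by (rule gen_subgroup_smult)
  ultimately show thesis using that by blast
qed

lemma additive_image_gen_set_not_in_line:
  fixes eps :: "int^'n::finite \<Rightarrow> 3^'m::finite"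
  assumes add: "\<And>x y. eps (x + y) = eps x + eps y" and surj: "surj eps" and "2 \<le> CARD('m)"
    and index: "finite_index_prime_to 3 (gen_subgroup A)"
  shows "\<not> eps ` A \<subseteq> {0, v}"
proof
  interpret additive eps by unfold_locales (rule add)
  assume line: "eps ` A \<subseteq> {0, v}"
  have "range eps \<subseteq> range (\<lambda>t::3. t *s v)"
  proof (rule image_subsetI)
    fix x
    have "prime (3::nat)" by simp
    then obtain l y where l: "l \<in> gen_subgroup A" and x: "x = l + int 3 *s y"
      by (rule index_prime_to_decomp[OF _ index])
    obtain c where c: "l = (\<Sum>a\<in>A. c a *s a)"
      using l by (auto simp: gen_subgroup_def)
    have "eps (int 3 *s y) = (of_int (int 3) :: 3) *s eps y"
      by (rule additive_smult_int[OF add])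
    also have "(of_int (int 3) :: 3) = 0" by simp
    finally have "eps (int 3 *s y) = 0" by simp
    moreover have "of_int (c a) *s eps a = (of_int (c a) * (if eps a = v then 1 else 0)) *s v"
      if "a \<in> A" for a
      using line that by (auto simp: vec_eq_iff)
    ultimately have "eps x = (\<Sum>a\<in>A. of_int (c a) * (if eps a = v then 1 else 0)) *s v"
      by (simp add: x c add sum additive_smult_int[OF add] vec_eq_iff sum_distrib_right)
    then show "eps x \<in> range (\<lambda>t::3. t *s v)" by blast
  qed
  then have "UNIV \<subseteq> range (\<lambda>t::3. t *s v)"
    using surj by simp
  then have "card (UNIV :: (3^'m) set) \<le> card (range (\<lambda>t::3. t *s v))"
    by (rule card_mono[rotated]) simp
  also have "\<dots> \<le> 3"
    using card_image_le[of UNIV "\<lambda>t::3. t *s v"] by simp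
  finally have "3 ^ CARD('m) \<le> (3::nat)" by simp
  moreover have "(3::nat) ^ 2 \<le> 3 ^ CARD('m)"
    using \<open>2 \<le> CARD('m)\<close> by (rule power_increasing) simp
  ultimately show False by simp
qed

definition orbit :: "(int^'n^'n) set \<Rightarrow> int^'n \<Rightarrow> (int^'n) set" where
  "orbit S x = (\<lambda>g. g *v x) ` S"

lemma orbit_subset_invariant:
  "(\<forall>w\<in>S. \<forall>a\<in>A. w *v a \<in> A) \<Longrightarrow> a \<in> A \<Longrightarrow> orbit S a \<subseteq> A"
  by (auto simp: orbit_def)

lemma card_orbit_ge_6:
  fixes S :: "(int^'n::finite^'n) set"
  assumes S: "is_subgroup S S" "finite S"
    and r: "r \<in> S" "r ** r ** r = mat 1" "\<And>y. r *v y = y \<Longrightarrow> y = 0"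
    and g: "g \<in> S" "g *v x \<notin> {x, r *v x, r *v (r *v x)}"
    and x: "x \<noteq> 0"
  shows "6 \<le> card (orbit S x)"
proof -
  let ?O = "\<lambda>y. {y, r *v y, r *v (r *v y)}"
  have mult: "a ** b \<in> S" if "a \<in> S" "b \<in> S" for a b
    using S(1) that by (simp add: is_subgroup_def)
  have Z3: "r *v (r *v (r *v y)) = y" for y
    using r(2) by (metis matrix_vector_mul_assoc matrix_vector_mul_lid)
  have card_O: "card (?O y) = 3" if "y \<noteq> 0" for y
  proof -
    have "r *v y \<noteq> y" using r(3) that by blast
    moreover have "r *v (r *v y) \<noteq> r *v y"
      using r(3)[of "r *v y"] Z3[of y] that by force
    moreover have "r *v (r *v y) \<noteq> y"
      using r(3) Z3[of y] that by metis
    ultimately show ?thesis by auto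
  qed
  obtain h where "h ** g = mat 1"
    using S(1) g(1) by (auto simp: is_subgroup_def)
  then have gx: "g *v x \<noteq> 0"
    using x by (metis matrix_vector_mul_assoc matrix_vector_mul_lid matrix_vector_mult_0_right)
  have closed: "r *v y \<in> ?O z" if "y \<in> ?O z" for y z
    using that Z3 by auto
  have sym: "z \<in> ?O y" if "y \<in> ?O z" for y z
    using that Z3 by auto
  have "?O x \<inter> ?O (g *v x) = {}"
  proof (rule ccontr)
    assume "?O x \<inter> ?O (g *v x) \<noteq> {}"
    then obtain u where u: "u \<in> ?O x" "g *v x \<in> ?O u"
      using sym by blast
    then have "g *v x \<in> ?O x"
      using closed[OF u(1)] closed[OF closed[OF u(1)]] by auto
    then show False using g(2) by blast
  qed
  moreover have "?O x \<union> ?O (g *v x) = (\<lambda>h. h *v x) ` {mat 1, r, r ** r, g, r ** g, r ** (r ** g)}"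
    by (auto simp: matrix_vector_mul_assoc)
  moreover have "{mat 1, r, r ** r, g, r ** g, r ** (r ** g)} \<subseteq> S"
    using S(1) r(1) g(1) mult by (auto simp: is_subgroup_def)
  ultimately have "card (?O x) + card (?O (g *v x)) \<le> card (orbit S x)"
    using S(2) unfolding orbit_def by (metis card_Un_disjoint card_mono finite_imageI finite_insert
        finite.emptyI image_mono)
  then show ?thesis using card_O x gx by simp
qed

lemma invariant_gen_set_orbits_of_basis:
  fixes S :: "(int^'n::finite^'n) set"
  assumes "finite S" "mat 1 \<in> S" "\<And>a b. a \<in> S \<Longrightarrow> b \<in> S \<Longrightarrow> a ** b \<in> S" "p \<noteq> 1"
  shows "invariant_gen_set p S (\<Union>j. orbit S (axis j 1))"
proof -
  let ?A = "\<Union>j. orbit S (axis j 1)"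
  have fin: "finite ?A"
    using assms(1) by (simp add: orbit_def)
  have "x \<in> gen_subgroup ?A" for x
  proof -
    have "axis j 1 \<in> orbit S (axis j 1)" for j
      using assms(2) unfolding orbit_def by (rule rev_image_eqI) simp
    then have "axis j 1 \<in> gen_subgroup ?A" for j
      using fin by (intro gen_subgroup_mem) auto
    then have "(\<Sum>j\<in>UNIV. x $ j *s axis j 1) \<in> gen_subgroup ?A"
      by (intro gen_subgroup_sum gen_subgroup_smult)
    then show ?thesis by (simp add: basis_expansion)
  qed
  then have "gen_subgroup ?A = UNIV" by blast
  moreover have "cosets (UNIV :: (int^'n) set) = {UNIV}"
  proof -
    have "(+) x ` UNIV = (UNIV :: (int^'n) set)" for x :: "int^'n"
      by (metis add.commute diff_add_cancel surj_def)
    then show ?thesis by (auto simp: cosets_def)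
  qed
  ultimately have "finite_index_prime_to p (gen_subgroup ?A)"
    using assms(4) by (simp add: finite_index_prime_to_def)
  moreover have "w *v a \<in> ?A" if w: "w \<in> S" and a: "a \<in> ?A" for w a
  proof -
    obtain j g where "g \<in> S" "a = g *v axis j 1"
      using a by (auto simp: orbit_def)
    then have "w *v a \<in> orbit S (axis j 1)"
      using w assms(3) unfolding orbit_def by (auto simp: matrix_vector_mul_assoc)
    then show ?thesis by blast
  qed
  ultimately show ?thesis
    using fin by (simp add: invariant_gen_set_def)
qed

lemma Rank_geI:
  assumes "invariant_gen_set p Sp A" "\<And>A. invariant_gen_set p Sp A \<Longrightarrow> n \<le> card A"
  shows "n \<le> Rank p S Sp"
  unfolding Rank_def by (rule LeastI2_ex) (use assms in auto)

lemma sylow_iff_eq_of_prime_power_card: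
  fixes S :: "(int^'n::finite^'n) set"
  assumes "is_subgroup S S" "finite S" "card S = p ^ k" "prime p"
  shows "sylow p S P \<longleftrightarrow> P = S"
proof -
  have "multiplicity p (card S) = k"
    using assms(3,4) by (simp add: multiplicity_same_power prime_gt_0_nat)
  then have "sylow p S P \<longleftrightarrow> is_subgroup P S \<and> card P = card S"
    by (simp add: sylow_def assms(3))
  then show ?thesis
    using assms(1,2) card_subset_eq by (auto simp: is_subgroup_def)
qed

lemma exhaust_6:
  fixes x :: 6
  shows "x = 0 \<or> x = 1 \<or> x = 2 \<or> x = 3 \<or> x = 4 \<or> x = 5"
proof (induct x)
  case (of_int z)
  then have "z = 0 \<or> z = 1 \<or> z = 2 \<or> z = 3 \<or> z = 4 \<or> z = 5" by fastforce
  then show ?case by auto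
qed

lemma forall_6: "(\<forall>i::6. P i) \<longleftrightarrow> P 0 \<and> P 1 \<and> P 2 \<and> P 3 \<and> P 4 \<and> P 5"
  by (metis exhaust_6)

lemma UNIV_6: "UNIV = {0, 1, 2, 3, 4, 5::6}"
  using exhaust_6 by auto

lemma sum_6: "sum f (UNIV::6 set) = f 0 + f 1 + f 2 + f 3 + f 4 + f 5"
  unfolding UNIV_6 by (simp add: ac_simps)

lemma idx_simps [simp]: "idx 0 = 0" "idx 1 = 1" "idx 2 = 2" "idx 3 = 3" "idx 4 = 4" "idx 5 = 5"
  by (simp_all add: idx_def bit0.Rep_numeral bit0.Rep_0 bit0.Rep_1)

lemma idx_less_6: "idx i < 6"
  using bit0.Rep_less_n[of i] by (simp add: idx_def)

lemma idx_of_nat: "i < 6 \<Longrightarrow> idx (of_nat i) = i"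
  by (simp add: idx_def bit0.of_nat_eq Abs_bit0_inverse)

text \<open>Roots and Weyl group elements are handled as integer lists in simple-root coordinates, so
  that the finite searches below can be run by \<open>code_simp\<close>.\<close>

definition list6 :: "int^6 \<Rightarrow> int list" where
  "list6 x = [x$0, x$1, x$2, x$3, x$4, x$5]"

lemma list6_nth_idx [simp]: "list6 x ! idx k = x $ k"
  using exhaust_6[of k] by (auto simp: list6_def)

lemma list6_inject: "list6 x = list6 y \<longleftrightarrow> x = y"
  by (metis list6_nth_idx vec_eq_iff)

definition cartan_list :: "int list list" where
  "cartan_list = [[2,0,-1,0,0,0], [0,2,0,-1,0,0], [-1,0,2,-1,0,0], [0,-1,-1,2,-1,0],
    [0,0,0,-1,2,-1], [0,0,0,0,-1,2]]"

lemma cartan_eq_cartan_list: "cartan i j = cartan_list ! idx i ! idx j"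
proof -
  have "\<forall>i j. cartan i j = cartan_list ! idx i ! idx j"
    unfolding forall_6 by (simp add: cartan_def e6_edge_def doubleton_eq_iff cartan_list_def)
  then show ?thesis by blast
qed

definition refl_list :: "nat \<Rightarrow> int list \<Rightarrow> int list" where
  "refl_list i xs = xs[i := xs ! i - sum_list (map2 (*) (cartan_list ! i) xs)]"

lemma list6_simple_refl: "list6 (simple_refl i *v x) = refl_list (idx i) (list6 x)"
proof -
  have "\<forall>i. list6 (simple_refl i *v x) = refl_list (idx i) (list6 x)"
    unfolding forall_6
    by (simp add: list6_def refl_list_def matrix_vector_mult_def sum_6 simple_refl_def
        cartan_eq_cartan_list cartan_list_def)
  then show ?thesis ..
qed

lemma simple_refl_involutive: "simple_refl i *v (simple_refl i *v x) = x"
proof -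
  have "\<forall>i. list6 (simple_refl i *v (simple_refl i *v x)) = list6 x"
    unfolding list6_simple_refl forall_6 by (simp add: list6_def refl_list_def cartan_list_def)
  then show ?thesis by (simp add: list6_inject)
qed

lemma simple_refl_mult_self: "simple_refl i ** simple_refl i = mat 1"
  by (simp add: matrix_eq matrix_vector_mul_assoc[symmetric] simple_refl_involutive)

definition cols :: "int^6^6 \<Rightarrow> int list list" where
  "cols w = map (\<lambda>j. list6 (w *v axis j 1)) [0, 1, 2, 3, 4, 5]"

lemma cols_nth_idx: "cols w ! idx j = list6 (w *v axis j 1)"
  using exhaust_6[of j] by (auto simp: cols_def)

lemma matrix_entry_cols: "w $ k $ j = cols w ! idx j ! idx k"
  by (simp add: cols_nth_idx matrix_vector_mult_axis)

lemma cols_inject: "cols w = cols w' \<longleftrightarrow> w = w'"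
  by (metis matrix_entry_cols vec_eq_iff)

lemma matrix_vector_mult_cols: "(w *v x) $ k = (\<Sum>j\<in>UNIV. cols w ! idx j ! idx k * x $ j)"
  by (simp add: matrix_vector_mult_def matrix_entry_cols[of w k])

definition unit_cols :: "int list list" where
  "unit_cols = [[1,0,0,0,0,0], [0,1,0,0,0,0], [0,0,1,0,0,0], [0,0,0,1,0,0], [0,0,0,0,1,0],
    [0,0,0,0,0,1]]"

lemma cols_mat_1: "cols (mat 1) = unit_cols"
  by (simp add: cols_def unit_cols_def list6_def axis_def)

lemma cols_simple_refl_mult: "cols (simple_refl i ** w) = map (refl_list (idx i)) (cols w)"
  by (simp add: cols_def matrix_vector_mul_assoc[symmetric] list6_simple_refl)

fun refl_word :: "nat list \<Rightarrow> int list \<Rightarrow> int list" where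
  "refl_word [] x = x"
| "refl_word (i # ws) x = refl_list i (refl_word ws x)"

definition word_cols :: "nat list \<Rightarrow> int list list" where
  "word_cols ws = map (refl_word ws) unit_cols"

fun word_mat :: "nat list \<Rightarrow> int^6^6" where
  "word_mat [] = mat 1"
| "word_mat (i # ws) = simple_refl (of_nat i) ** word_mat ws"

lemma word_mat_in_weyl_group: "word_mat ws \<in> weyl_group"
  by (induction ws) (auto intro: weyl_group.intros)

lemma word_mat_append: "word_mat (vs @ ws) = word_mat vs ** word_mat ws"
  by (induction vs) (simp_all add: matrix_mul_assoc)

lemma cols_word_mat: "\<forall>i\<in>set ws. i < 6 \<Longrightarrow> cols (word_mat ws) = word_cols ws"
proof (induction ws)
  case Nil
  have "refl_word [] = (\<lambda>x. x)" by (rule ext) simp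
  then show ?case by (simp add: cols_mat_1 word_cols_def)
next
  case (Cons i ws)
  then show ?case by (simp add: cols_simple_refl_mult idx_of_nat word_cols_def)
qed

section \<open>Invariants of the Weyl group\<close>

definition root_list :: "int list list" where
  "root_list = [[-1,-2,-2,-3,-2,-1],
    [-1,-1,-2,-3,-2,-1],
    [-1,-1,-2,-2,-2,-1],
    [-1,-1,-2,-2,-1,-1],
    [-1,-1,-2,-2,-1,0],
    [-1,-1,-1,-2,-2,-1],
    [-1,-1,-1,-2,-1,-1],
    [-1,-1,-1,-2,-1,0],
    [-1,-1,-1,-1,-1,-1],
    [-1,-1,-1,-1,-1,0],
    [-1,-1,-1,-1,0,0],
    [-1,0,-1,-1,-1,-1],
    [-1,0,-1,-1,-1,0],
    [-1,0,-1,-1,0,0],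
    [-1,0,-1,0,0,0],
    [-1,0,0,0,0,0],
    [0,-1,-1,-2,-2,-1],
    [0,-1,-1,-2,-1,-1],
    [0,-1,-1,-2,-1,0],
    [0,-1,-1,-1,-1,-1],
    [0,-1,-1,-1,-1,0],
    [0,-1,-1,-1,0,0],
    [0,-1,0,-1,-1,-1],
    [0,-1,0,-1,-1,0],
    [0,-1,0,-1,0,0],
    [0,-1,0,0,0,0],
    [0,0,-1,-1,-1,-1],
    [0,0,-1,-1,-1,0],
    [0,0,-1,-1,0,0],
    [0,0,-1,0,0,0],
    [0,0,0,-1,-1,-1],
    [0,0,0,-1,-1,0],
    [0,0,0,-1,0,0],
    [0,0,0,0,-1,-1],
    [0,0,0,0,-1,0],
    [0,0,0,0,0,-1],
    [0,0,0,0,0,1],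
    [0,0,0,0,1,0],
    [0,0,0,0,1,1],
    [0,0,0,1,0,0],
    [0,0,0,1,1,0],
    [0,0,0,1,1,1],
    [0,0,1,0,0,0],
    [0,0,1,1,0,0],
    [0,0,1,1,1,0],
    [0,0,1,1,1,1],
    [0,1,0,0,0,0],
    [0,1,0,1,0,0],
    [0,1,0,1,1,0],
    [0,1,0,1,1,1],
    [0,1,1,1,0,0],
    [0,1,1,1,1,0],
    [0,1,1,1,1,1],
    [0,1,1,2,1,0],
    [0,1,1,2,1,1],
    [0,1,1,2,2,1],
    [1,0,0,0,0,0],
    [1,0,1,0,0,0],
    [1,0,1,1,0,0],
    [1,0,1,1,1,0],
    [1,0,1,1,1,1],
    [1,1,1,1,0,0],
    [1,1,1,1,1,0],
    [1,1,1,1,1,1],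
    [1,1,1,2,1,0],
    [1,1,1,2,1,1],
    [1,1,1,2,2,1],
    [1,1,2,2,1,0],
    [1,1,2,2,1,1],
    [1,1,2,2,2,1],
    [1,1,2,3,2,1],
    [1,2,2,3,2,1]]"

lemma refl_list_root_list: "i < 6 \<Longrightarrow> r \<in> set root_list \<Longrightarrow> refl_list i r \<in> set root_list"
proof -
  have "list_all (\<lambda>i. list_all (\<lambda>r. refl_list i r \<in> set root_list) root_list) [0..<6]"
    by code_simp
  then show "i < 6 \<Longrightarrow> r \<in> set root_list \<Longrightarrow> refl_list i r \<in> set root_list"
    by (simp add: list_all_iff)
qed

lemma cols_weyl_group_roots: "w \<in> weyl_group \<Longrightarrow> set (cols w) \<subseteq> set root_list"
proof (induction rule: weyl_group.induct)
  case one
  have "set unit_cols \<subseteq> set root_list" by code_simp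
  then show ?case by (simp add: cols_mat_1)
next
  case (step w i)
  then show ?case
    using refl_list_root_list[OF idx_less_6] by (auto simp: cols_simple_refl_mult)
qed

text \<open>The \<open>W\<close>-invariant bilinear form in simple-root coordinates: its matrix is the
  (symmetric) Cartan matrix.\<close>

definition form_list :: "int list \<Rightarrow> int list \<Rightarrow> int" where
  "form_list a b = sum_list (map2 (*) a (map (\<lambda>row. sum_list (map2 (*) row b)) cartan_list))"

lemma form_list_refl_list:
  "form_list (refl_list (idx i) [a0, a1, a2, a3, a4, a5]) (refl_list (idx i) [b0, b1, b2, b3, b4, b5])
    = form_list [a0, a1, a2, a3, a4, a5] [b0, b1, b2, b3, b4, b5]"
  using exhaust_6[of i]
  by (elim disjE; simp add: form_list_def refl_list_def cartan_list_def algebra_simps)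

lemma form_list_simple_refl:
  "form_list (list6 (simple_refl i *v x)) (list6 (simple_refl i *v y)) = form_list (list6 x) (list6 y)"
  unfolding list6_simple_refl by (simp only: list6_def form_list_refl_list)

lemma weyl_group_preserves_form:
  "w \<in> weyl_group \<Longrightarrow> form_list (list6 (w *v x)) (list6 (w *v y)) = form_list (list6 x) (list6 y)"
  by (induction arbitrary: x y rule: weyl_group.induct)
    (simp_all add: matrix_vector_mul_assoc[symmetric] form_list_simple_refl)

lemma cols_weyl_group_gram:
  assumes "w \<in> weyl_group"
  shows "form_list (cols w ! idx i) (cols w ! idx j) = cartan_list ! idx i ! idx j"
proof -
  have "\<forall>i j. form_list (list6 (axis i 1)) (list6 (axis j 1)) = cartan_list ! idx i ! idx j"
    unfolding forall_6 by (simp add: form_list_def list6_def axis_def cartan_list_def)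
  then show ?thesis
    by (simp add: cols_nth_idx weyl_group_preserves_form[OF assms])
qed

text \<open>The coordinates of \<open>3 \<omega>\<^sub>1\<close>, three times the first fundamental weight. Since
  \<open>w \<omega>\<^sub>1 - \<omega>\<^sub>1\<close> lies in the root lattice for every \<open>w \<in> W\<close>, every element of \<open>W\<close>
  fixes \<open>3 \<omega>\<^sub>1\<close> modulo \<open>3 X(T)\<close>; the diagram automorphism does not.\<close>

definition omega3_list :: "int list" where
  "omega3_list = [4, 3, 5, 6, 4, 2]"

definition omega3 :: "int^6" where
  "omega3 = (\<chi> k. omega3_list ! idx k)"

lemma simple_refl_omega3_cong: "\<exists>c. simple_refl i *v omega3 = omega3 + 3 *s c"
proof -
  have "\<forall>i. list6 (simple_refl i *v omega3) = list6 (omega3 + 3 *s (if i = 0 then - axis 0 1 else 0))"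
    unfolding list6_simple_refl forall_6
    by (simp add: omega3_def omega3_list_def refl_list_def cartan_list_def list6_def axis_def)
  then have "simple_refl i *v omega3 = omega3 + 3 *s (if i = 0 then - axis 0 1 else 0)"
    by (simp only: list6_inject)
  then show ?thesis by blast
qed

lemma weyl_group_omega3_cong: "w \<in> weyl_group \<Longrightarrow> \<exists>u. w *v omega3 = omega3 + 3 *s u"
proof (induction rule: weyl_group.induct)
  case one
  show ?case by (rule exI[of _ 0]) simp
next
  case (step w i)
  obtain u where u: "w *v omega3 = omega3 + 3 *s u" using step.IH by blast
  obtain c where c: "simple_refl i *v omega3 = omega3 + 3 *s c"
    using simple_refl_omega3_cong by blast
  have "(simple_refl i ** w) *v omega3 = simple_refl i *v omega3 + 3 *s (simple_refl i *v u)"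
    by (simp add: matrix_vector_mul_assoc[symmetric] u matrix_vector_right_distrib
        matrix_vector_mult_smult)
  also have "\<dots> = omega3 + 3 *s (c + simple_refl i *v u)"
    by (simp add: c add.assoc)
  finally show ?case by blast
qed

section \<open>The character \<open>\<epsilon>\<close>\<close>

definition eps0 :: "int^6 \<Rightarrow> 3^2" where
  "eps0 x = vector [of_int (x$3), of_int (x$0 + x$1 + x$2 + x$4 + x$5)]"

lemma eps0_add: "eps0 (x + y) = eps0 x + eps0 y"
  by (simp add: eps0_def vec_eq_iff forall_2)

lemma surj_eps0: "surj eps0"
  unfolding surj_def
proof
  fix v :: "3^2"
  obtain a b where "v $ 1 = of_int a" "v $ 2 = of_int b"
    by (metis bit1.cases)
  then have "v = eps0 (a *s axis 3 1 + b *s axis 0 1)"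
    by (simp add: eps0_def vec_eq_iff forall_2 axis_def)
  then show "\<exists>x. v = eps0 x" by blast
qed

lemma of_int_eq_iff_mod_3: "(of_int a :: 3) = of_int b \<longleftrightarrow> a mod 3 = b mod 3"
  by (simp add: bit1.of_int_eq Abs_bit1_inject)

definition eps_list :: "int list \<Rightarrow> int \<times> int" where
  "eps_list l = (l ! 3 mod 3, (l ! 0 + l ! 1 + l ! 2 + l ! 4 + l ! 5) mod 3)"

lemma eps0_eq_iff: "eps0 x = eps0 y \<longleftrightarrow> eps_list (list6 x) = eps_list (list6 y)"
  by (simp add: eps0_def eps_list_def list6_def vec_eq_iff forall_2 of_int_eq_iff_mod_3
      flip: of_int_add)

lemma eps0_0: "eps0 0 = 0"
  by (simp add: eps0_def vec_eq_iff forall_2)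

lemma eps0_root_nonzero:
  assumes "\<alpha> \<in> roots"
  shows "eps0 \<alpha> \<noteq> 0"
proof -
  obtain w i where w: "w \<in> weyl_group" and \<alpha>: "\<alpha> = w *v axis i 1"
    using assms by (auto simp: roots_def simple_root_def)
  have "cols w ! idx i \<in> set (cols w)"
    using idx_less_6[of i] by (intro nth_mem) (simp add: cols_def)
  then have "list6 \<alpha> \<in> set root_list"
    using cols_weyl_group_roots[OF w] by (auto simp: \<alpha> cols_nth_idx)
  moreover have "list_all (\<lambda>r. eps_list r \<noteq> (0, 0)) root_list"
    by code_simp
  ultimately have "eps_list (list6 \<alpha>) \<noteq> (0, 0)"
    unfolding list_all_iff by blast
  moreover have "eps_list (list6 0) = (0, 0)"
    by (simp add: eps_list_def list6_def)
  ultimately have "eps0 \<alpha> \<noteq> eps0 0"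
    by (simp add: eps0_eq_iff)
  then show ?thesis by (simp add: eps0_0)
qed

section \<open>The stabiliser of \<open>\<epsilon>\<close>\<close>

lemma W_eps_eps0_iff:
  "w \<in> W_eps eps0 \<longleftrightarrow> w \<in> weyl_group \<and> map eps_list (cols w) = map eps_list unit_cols"
proof -
  have "(\<forall>x. eps0 (w *v x) = eps0 x) \<longleftrightarrow> (\<forall>j. eps0 (w *v axis j 1) = eps0 (axis j 1))"
    by (rule additive_matrix_invariant_iff) (rule eps0_add)
  also have "\<dots> \<longleftrightarrow> map eps_list (cols w) = map eps_list (cols (mat 1))"
    unfolding forall_6 eps0_eq_iff by (simp add: cols_def)
  finally show ?thesis by (simp add: W_eps_def cols_mat_1)
qed

definition fits :: "int list list \<Rightarrow> nat \<Rightarrow> int list \<Rightarrow> bool" where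
  "fits p j c \<longleftrightarrow> list_all (\<lambda>i. form_list (p ! i) c = cartan_list ! i ! j) [0..<length p]"

definition frame_candidates :: "nat \<Rightarrow> int list list" where
  "frame_candidates j = filter (\<lambda>r. eps_list r = eps_list (unit_cols ! j)) root_list"

text \<open>\<open>frames n\<close> contains every possible list of the first \<open>n\<close> columns of an element of
  \<open>W(\<epsilon>)\<close>: roots with the \<open>\<epsilon>\<close>-values of the simple roots whose Gram matrix is the
  Cartan matrix.\<close>

fun frames :: "nat \<Rightarrow> int list list list" where
  "frames 0 = [[]]"
| "frames (Suc j) =
    concat (map (\<lambda>p. map (\<lambda>c. p @ [c]) (filter (fits p j) (frame_candidates j))) (frames j))"

definition omega3_fixed_mod_3 :: "int list list \<Rightarrow> bool" where
  "omega3_fixed_mod_3 cs \<longleftrightarrow>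
    list_all (\<lambda>k. sum_list (map2 (\<lambda>v c. v * c ! k) omega3_list cs) mod 3 = omega3_list ! k mod 3)
      [0, 1, 2, 3, 4, 5]"

definition stabiliser_frames :: "int list list list" where
  "stabiliser_frames = filter omega3_fixed_mod_3 (frames 6)"

lemma take_in_frames:
  assumes "n \<le> length rs"
    and "\<And>j. j < n \<Longrightarrow> rs ! j \<in> set (frame_candidates j)"
    and "\<And>i j. i < j \<Longrightarrow> j < n \<Longrightarrow> form_list (rs ! i) (rs ! j) = cartan_list ! i ! j"
  shows "take n rs \<in> set (frames n)"
  using assms
proof (induction n)
  case 0
  then show ?case by simp
next
  case (Suc n)
  then have "take n rs \<in> set (frames n)" by simp
  moreover have "fits (take n rs) n (rs ! n)"
    using Suc.prems by (simp add: fits_def list_all_iff)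
  moreover have "take (Suc n) rs = take n rs @ [rs ! n]"
    using Suc.prems(1) by (simp add: take_Suc_conv_app_nth)
  ultimately show ?case using Suc.prems(2) by auto
qed

lemma weyl_group_omega3_fixed_mod_3:
  assumes "w \<in> weyl_group"
  shows "omega3_fixed_mod_3 (cols w)"
proof -
  obtain u where u: "w *v omega3 = omega3 + 3 *s u"
    using weyl_group_omega3_cong[OF assms] by blast
  have "\<forall>k. (\<Sum>j\<in>UNIV. omega3 $ j * w $ k $ j) mod 3 = omega3 $ k mod 3"
  proof
    fix k
    have "(\<Sum>j\<in>UNIV. omega3 $ j * w $ k $ j) = (w *v omega3) $ k"
      by (simp add: matrix_vector_mult_def mult.commute)
    then show "(\<Sum>j\<in>UNIV. omega3 $ j * w $ k $ j) mod 3 = omega3 $ k mod 3" by (simp add: u)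
  qed
  then show ?thesis
    unfolding forall_6
    by (simp add: omega3_fixed_mod_3_def sum_6 omega3_def omega3_list_def cols_def list6_def
        matrix_vector_mult_axis add.assoc)
qed

lemma W_eps_cols_in_stabiliser_frames:
  assumes "w \<in> W_eps eps0"
  shows "cols w \<in> set stabiliser_frames"
proof -
  have w: "w \<in> weyl_group" and eps: "map eps_list (cols w) = map eps_list unit_cols"
    using assms by (auto simp: W_eps_eps0_iff)
  have len: "length (cols w) = 6" "length unit_cols = 6"
    by (simp_all add: cols_def unit_cols_def)
  have "take 6 (cols w) \<in> set (frames 6)"
  proof (rule take_in_frames)
    fix j :: nat
    assume j: "j < 6"
    have "cols w ! j \<in> set root_list"
      using cols_weyl_group_roots[OF w] j len by (metis nth_mem subsetD)
    moreover have "eps_list (cols w ! j) = eps_list (unit_cols ! j)"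
      using arg_cong[OF eps, of "\<lambda>l. l ! j"] j len by simp
    ultimately show "cols w ! j \<in> set (frame_candidates j)"
      by (simp add: frame_candidates_def)
  next
    fix i j :: nat
    assume "i < j" "j < 6"
    then show "form_list (cols w ! i) (cols w ! j) = cartan_list ! i ! j"
      using cols_weyl_group_gram[OF w, of "of_nat i" "of_nat j"] by (simp add: idx_of_nat)
  qed (simp add: len)
  then show ?thesis
    using weyl_group_omega3_fixed_mod_3[OF w] by (simp add: stabiliser_frames_def len)
qed

definition stabiliser_words :: "nat list list" where
  "stabiliser_words = [[4,2,3,0,2,1,3,4,5,0,2,3,4,1,3,2,1,0],
    [3,0,2,1,3,4,5,0,2,1,3,4,1,3,2,0],
    [5,4,3,2,1,3,4,5,0,2,3,4,1,3,2,0],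
    [4,5,3,4,2,3,0,2,1,3,4,5,4,3,2,1,3,4,0,2,3,2,1,0],
    [5,4,2,0],
    [1,3,4,2,3,0,2,1,3,4,5,4,3,2,1,3,4,0,2,3,2,0],
    [2,3,4,5,1,3,4,2,3,0,2,1,3,4,5,2,1,0],
    [0,2,3,4,5,1,3,4,2,3,0,2,1,3,2,0],
    [1,3,4,5,1,3,4,2,3,0,2,1,3,4,2,0],
    [2,1,3,4,5,1,3,4,2,3,0,2,1,3,4,1],
    [0,2,3,4,5,1,3,4,2,3,0,2,1,3,4,5],
    [3,4,5,1,3,4,2,3,0,2,1,3],
    [2,3,4,5,1,3,4,2,3,0,2,1,3,0,2,1],
    [0,2,1,3,4,5,1,3,4,2,3,0,2,1,3,4,0,2],
    [3,4,5,1,3,4,2,3,0,2,1,3,4,5,0,2],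
    [3,4,2,3,0,2,1,3,4,5,4,3,2,1,3,4,0,2,3,0,2,1],
    [4,5,0,2],
    [5,1,3,4,2,3,0,2,1,3,4,5,4,3,0,2,1,3,4,0,2,3,0,2],
    [4,3,0,2,1,3,4,5,0,2,1,3,4,1,3,1],
    [3,2,1,3,4,5,0,2,3,4,1,3],
    [5,4,2,3,0,2,1,3,4,5,0,2,3,4,1,3],
    [5,3,4,2,3,0,2,1,3,4,5,4,3,0,2,1,3,4,0,2,3,1],
    [],
    [4,5,1,3,4,2,3,0,2,1,3,4,5,4,3,2,1,3,4,0,2,3],
    [4,3,2,1,3,4,5,0,2,3,4,1,3,0,2,1],
    [2,3,0,2,1,3,4,5,0,2,3,4,1,3,0,2],
    [5,4,3,0,2,1,3,4,5,0,2,1,3,4,1,3,0,2]]"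


lemma stabiliser_frames_eq: "stabiliser_frames = map word_cols stabiliser_words"
  by code_simp

lemma stabiliser_words_valid:
  "list_all (\<lambda>ws. list_all (\<lambda>i. i < 6) ws \<and> map eps_list (word_cols ws) = map eps_list unit_cols)
    stabiliser_words"
  by code_simp

lemma distinct_stabiliser_words_cols: "distinct (map word_cols stabiliser_words)"
  by code_simp

lemma W_eps_eps0_eq: "W_eps eps0 = word_mat ` set stabiliser_words"
proof (intro equalityI subsetI)
  fix w
  assume "w \<in> W_eps eps0"
  then have "cols w \<in> set (map word_cols stabiliser_words)"
    by (metis W_eps_cols_in_stabiliser_frames stabiliser_frames_eq)
  then obtain ws where ws: "ws \<in> set stabiliser_words" "cols w = word_cols ws" by auto
  then have "cols w = cols (word_mat ws)"
    using stabiliser_words_valid by (simp add: cols_word_mat list_all_iff)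
  then show "w \<in> word_mat ` set stabiliser_words"
    using ws(1) by (auto simp: cols_inject)
next
  fix w
  assume "w \<in> word_mat ` set stabiliser_words"
  then obtain ws where "ws \<in> set stabiliser_words" "w = word_mat ws" by blast
  then show "w \<in> W_eps eps0"
    using stabiliser_words_valid word_mat_in_weyl_group
    by (simp add: W_eps_eps0_iff cols_word_mat list_all_iff)
qed

lemma finite_W_eps_eps0: "finite (W_eps eps0)"
  by (simp add: W_eps_eps0_eq)

lemma card_W_eps_eps0: "card (W_eps eps0) = 3 ^ 3"
proof -
  have "inj_on word_mat (set stabiliser_words)"
  proof (rule inj_onI)
    fix vs ws
    assume "vs \<in> set stabiliser_words" "ws \<in> set stabiliser_words" "word_mat vs = word_mat ws"
    then have "word_cols vs = word_cols ws" "vs \<in> set stabiliser_words" "ws \<in> set stabiliser_words"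
      using stabiliser_words_valid by (auto simp: list_all_iff cols_word_mat[symmetric])
    then show "vs = ws"
      using distinct_stabiliser_words_cols by (auto simp: distinct_map inj_on_def)
  qed
  moreover have "card (set stabiliser_words) = 27"
    using distinct_stabiliser_words_cols
    by (simp add: distinct_card distinct_map) (simp add: stabiliser_words_def)
  ultimately show ?thesis by (simp add: W_eps_eps0_eq card_image)
qed

lemma weyl_group_mult: "a \<in> weyl_group \<Longrightarrow> b \<in> weyl_group \<Longrightarrow> a ** b \<in> weyl_group"
proof (induction rule: weyl_group.induct)
  case (step w i)
  then show ?case by (metis matrix_mul_assoc weyl_group.step)
qed simp

lemma weyl_group_inverse: "w \<in> weyl_group \<Longrightarrow> \<exists>v\<in>weyl_group. w ** v = mat 1 \<and> v ** w = mat 1"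
proof (induction rule: weyl_group.induct)
  case one
  show ?case using weyl_group.one by force
next
  case (step w i)
  then obtain v where v: "v \<in> weyl_group" "w ** v = mat 1" "v ** w = mat 1" by blast
  have "simple_refl i \<in> weyl_group"
    using weyl_group.step[OF weyl_group.one, of i] by simp
  then have "v ** simple_refl i \<in> weyl_group" using v(1) by (rule weyl_group_mult[rotated])
  moreover have "(simple_refl i ** w) ** (v ** simple_refl i) = mat 1"
    by (metis matrix_mul_assoc matrix_mul_lid v(2) simple_refl_mult_self)
  moreover have "(v ** simple_refl i) ** (simple_refl i ** w) = mat 1"
    by (metis matrix_mul_assoc matrix_mul_lid v(3) simple_refl_mult_self)
  ultimately show ?case by blast
qed

lemma is_subgroup_W_eps: "is_subgroup (W_eps eps) (W_eps eps)"
  unfolding is_subgroup_def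
proof (intro conjI ballI)
  show "mat 1 \<in> W_eps eps" by (simp add: W_eps_def weyl_group.one)
next
  fix a b
  assume "a \<in> W_eps eps" "b \<in> W_eps eps"
  then show "a ** b \<in> W_eps eps"
    by (simp add: W_eps_def weyl_group_mult matrix_vector_mul_assoc[symmetric])
next
  fix a
  assume a: "a \<in> W_eps eps"
  then obtain v where v: "v \<in> weyl_group" "a ** v = mat 1" "v ** a = mat 1"
    using weyl_group_inverse by (auto simp: W_eps_def)
  have "eps (v *v x) = eps x" for x
  proof -
    have "eps (v *v x) = eps (a *v (v *v x))" using a by (simp add: W_eps_def)
    also have "\<dots> = eps x" by (simp add: matrix_vector_mul_assoc v(2))
    finally show ?thesis .
  qed
  then show "\<exists>b\<in>W_eps eps. a ** b = mat 1 \<and> b ** a = mat 1"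
    using v by (auto simp: W_eps_def)
qed simp

definition Z_word :: "nat list" where
  "Z_word = [4,5,3,4,2,3,0,2,1,3,4,5,4,3,2,1,3,4,0,2,3,2,1,0]"

definition Z :: "int^6^6" where
  "Z = word_mat Z_word"

definition G1 :: "int^6^6" where
  "G1 = word_mat [5,4,2,0]"

definition G2 :: "int^6^6" where
  "G2 = word_mat [3,4,5,1,3,4,2,3,0,2,1,3]"

lemma Z_G1_G2_in_W_eps: "Z \<in> W_eps eps0" "G1 \<in> W_eps eps0" "G2 \<in> W_eps eps0"
  unfolding W_eps_eps0_eq Z_def Z_word_def G1_def G2_def
  by (intro imageI; simp add: stabiliser_words_def)+

lemma cols_Z:
  "cols Z = [[-1,0,-1,0,0,0], [-1,-2,-2,-3,-2,-1], [1,0,0,0,0,0], [0,1,1,1,1,0], [0,0,0,0,0,1],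
    [0,0,0,0,-1,-1]]"
  unfolding Z_def by (subst cols_word_mat) code_simp+

lemma cols_G1:
  "cols G1 = [[-1,0,-1,0,0,0], [0,1,0,0,0,0], [1,0,0,0,0,0], [0,0,1,1,1,1], [0,0,0,0,-1,-1],
    [0,0,0,0,1,0]]"
  unfolding G1_def by (subst cols_word_mat) code_simp+

lemma cols_G2:
  "cols G2 = [[0,0,0,0,0,1], [1,0,0,0,0,0], [0,0,0,0,1,0], [-1,-1,-1,-2,-2,-1], [1,1,2,3,2,1],
    [0,1,0,0,0,0]]"
  unfolding G2_def by (subst cols_word_mat) code_simp+

lemma Z_cube: "Z ** Z ** Z = mat 1"
proof -
  have "Z ** Z ** Z = word_mat (Z_word @ Z_word @ Z_word)"
    by (simp add: Z_def word_mat_append matrix_mul_assoc)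
  moreover have "cols (word_mat (Z_word @ Z_word @ Z_word)) = word_cols (Z_word @ Z_word @ Z_word)"
    by (rule cols_word_mat) (simp add: Z_word_def)
  moreover have "word_cols (Z_word @ Z_word @ Z_word) = cols (mat 1)"
    unfolding cols_mat_1 by code_simp
  ultimately show ?thesis by (simp add: cols_inject)
qed

lemma cols_Z_Z:
  "cols (Z ** Z) = [[0,0,1,0,0,0], [1,1,2,3,2,1], [-1,0,-1,0,0,0], [0,-1,-1,-2,-1,0],
    [0,0,0,0,-1,-1], [0,0,0,0,1,0]]"
proof -
  have "cols (Z ** Z) = word_cols (Z_word @ Z_word)"
    unfolding Z_def word_mat_append[symmetric] by (rule cols_word_mat) (simp add: Z_word_def)
  also have "\<dots> = [[0,0,1,0,0,0], [1,1,2,3,2,1], [-1,0,-1,0,0,0], [0,-1,-1,-2,-1,0],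
      [0,0,0,0,-1,-1], [0,0,0,0,1,0]]"
    by code_simp
  finally show ?thesis .
qed

lemma Z_fixed_point_free:
  assumes "Z *v x = x"
  shows "x = 0"
  using assms unfolding vec_eq_iff forall_6 matrix_vector_mult_cols cols_Z sum_6
  by (simp; (elim conjE, intro conjI; linarith))

lemma G1_G2_not_both_in_Z_orbit:
  assumes "G1 *v x \<in> {x, Z *v x, Z *v (Z *v x)}" "G2 *v x \<in> {x, Z *v x, Z *v (Z *v x)}"
  shows "x = 0"
  using assms unfolding insert_iff empty_iff simp_thms matrix_vector_mul_assoc
  unfolding vec_eq_iff forall_6 matrix_vector_mult_cols cols_Z cols_Z_Z cols_G1 cols_G2 sum_6
  by (elim disjE; simp; (elim conjE, intro conjI; linarith))

lemma fixed_pts_W_eps_eps0: "fixed_pts (W_eps eps0) = {0}"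
proof
  show "fixed_pts (W_eps eps0) \<subseteq> {0}"
  proof
    fix x
    assume "x \<in> fixed_pts (W_eps eps0)"
    then have "G1 *v x = x" "G2 *v x = x"
      using Z_G1_G2_in_W_eps by (auto simp: fixed_pts_def)
    then show "x \<in> {0}" using G1_G2_not_both_in_Z_orbit by simp
  qed
qed (simp add: fixed_pts_def)

section \<open>The rank of \<open>W(\<epsilon>)\<close> on \<open>X(T)\<close>\<close>

lemma card_orbit_W_eps_eps0_ge_6:
  assumes "x \<noteq> 0"
  shows "6 \<le> card (orbit (W_eps eps0) x)"
proof -
  obtain g where g: "g \<in> {G1, G2}" "g *v x \<notin> {x, Z *v x, Z *v (Z *v x)}"
    using G1_G2_not_both_in_Z_orbit assms by blast
  have "g \<in> W_eps eps0"
    using g(1) Z_G1_G2_in_W_eps by blast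
  from card_orbit_ge_6[OF is_subgroup_W_eps finite_W_eps_eps0 Z_G1_G2_in_W_eps(1) Z_cube
      Z_fixed_point_free this g(2) assms]
  show ?thesis .
qed

lemma card_invariant_gen_set_ge_12:
  assumes "invariant_gen_set 3 (W_eps eps0) A"
  shows "12 \<le> card A"
proof -
  have finA: "finite A" and inv: "\<forall>w\<in>W_eps eps0. \<forall>a\<in>A. w *v a \<in> A"
    and index: "finite_index_prime_to 3 (gen_subgroup A)"
    using assms by (auto simp: invariant_gen_set_def)
  note not_in_line = additive_image_gen_set_not_in_line[OF eps0_add surj_eps0 _ index]
  obtain a where a: "a \<in> A" "eps0 a \<noteq> 0"
    using not_in_line[of 0] by auto
  obtain b where b: "b \<in> A" "eps0 b \<noteq> 0" "eps0 b \<noteq> eps0 a"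
    using not_in_line[of "eps0 a"] by auto
  let ?O = "orbit (W_eps eps0)"
  have eps_orbit: "eps0 y = eps0 x" if "y \<in> ?O x" for x y
    using that by (auto simp: orbit_def W_eps_def)
  have "?O a \<inter> ?O b = {}"
    unfolding disjoint_iff using b(3) eps_orbit by metis
  then have "card (?O a \<union> ?O b) = card (?O a) + card (?O b)"
    by (rule card_Un_disjoint[rotated 2]) (simp_all add: orbit_def finite_W_eps_eps0)
  moreover have "card (?O a \<union> ?O b) \<le> card A"
    using orbit_subset_invariant[OF inv] a(1) b(1) finA by (intro card_mono) auto
  moreover have "6 \<le> card (?O a)" "6 \<le> card (?O b)"
    using a(2) b(2) eps0_0 by (auto intro: card_orbit_W_eps_eps0_ge_6)
  ultimately show ?thesis by linarith
qed

lemma Rank_W_eps_eps0_ge_12: "12 \<le> Rank 3 S (W_eps eps0)"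
proof (rule Rank_geI)
  show "invariant_gen_set 3 (W_eps eps0) (\<Union>j. orbit (W_eps eps0) (axis j 1))"
    using is_subgroup_W_eps[of eps0] finite_W_eps_eps0
    by (intro invariant_gen_set_orbits_of_basis) (auto simp: is_subgroup_def)
qed (rule card_invariant_gen_set_ge_12)

theorem proposition17p1:
  fixes k0 :: "'k::field"
  assumes "CHAR('k) \<noteq> 3"
  shows "\<exists>eps :: charlat \<Rightarrow> 3 ^ 2.
           (\<forall>x y. eps (x + y) = eps x + eps y) \<and> surj eps
         \<and> (\<forall>\<alpha>\<in>roots. eps \<alpha> \<noteq> 0)
         \<and> (\<exists>P. sylow 3 (W_eps eps) P \<and> fixed_pts P = {0})
         \<and> (\<forall>P. sylow 3 (W_eps eps) P \<longrightarrow> Rank 3 (W_eps eps) P \<ge> 12)"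
proof (intro exI[of _ eps0] conjI allI ballI impI)
  have sylow: "sylow 3 (W_eps eps0) P \<longleftrightarrow> P = W_eps eps0" for P
    by (rule sylow_iff_eq_of_prime_power_card[where k = 3])
      (simp_all add: is_subgroup_W_eps finite_W_eps_eps0 card_W_eps_eps0)
  show "eps0 (x + y) = eps0 x + eps0 y" for x y by (rule eps0_add)
  show "surj eps0" by (rule surj_eps0)
  show "eps0 \<alpha> \<noteq> 0" if "\<alpha> \<in> roots" for \<alpha> using that by (rule eps0_root_nonzero)
  show "\<exists>P. sylow 3 (W_eps eps0) P \<and> fixed_pts P = {0}"
    using sylow fixed_pts_W_eps_eps0 by blast
  show "12 \<le> Rank 3 (W_eps eps0) P" if "sylow 3 (W_eps eps0) P" for P
    using that sylow Rank_W_eps_eps0_ge_12 by simp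
qed

end
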